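(* Let $n$ be a positive integer and $m=n+1$. Then for every zero-normalized $\Gamma_{m,n}$-semimodule $\Delta$, $G_n(\widehat{\Delta})=\big(G_n(\Delta)\big)^T$, where $T$ denotes transposition (conjugation) of Young diagrams.
   Context: Let $m,n$ be coprime positive integers and $\Gamma=\{am+bn:a,b\in\mathbb{Z}_{\ge0}\}$. A $\Gamma$-semimodule is $\Delta\subset\mathbb{Z}_{\ge0}$ with $\Delta+\Gamma\subset\Delta$; zero-normalized means $\min\Delta=0$. An $n$-generator of $\Delta$ is $a\in\Delta$ with $a-n\notin\Delta$; there are exactly $n$ of them, $b_1<\dots<b_n$. Put $g_n(x)=\#(([x,x+m)\cap\mathbb{Z})\setminus\Delta)$; then $g_n(b_1)\ge\dots\ge g_n(b_n)$ and $G_n(\Delta)$ is the Young diagram with these column heights. The dual semimodule is $\Delta^*=\{\varphi\in\mathbb{Z}:\varphi+\Delta\subset\Gamma\}$, and $\widehat\Delta=\Delta^*-\min\Delta^*$ (equivalently $\widehat\Delta=\max(\mathbb{Z}\setminus\Delta)-(\mathbb{Z}\setminus\Delta)$). *)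

theory Defs
  imports Main
begin

definition Gamma :: "nat \<Rightarrow> nat \<Rightarrow> int set" where
  "Gamma m n = {int (a * m + b * n) | a b. True}"

definition semimodule :: "nat \<Rightarrow> nat \<Rightarrow> int set \<Rightarrow> bool" where
  "semimodule m n D \<longleftrightarrow> D \<subseteq> {0..} \<and> (\<forall>d\<in>D. \<forall>g\<in>Gamma m n. d + g \<in> D)"

definition zero_normalized :: "int set \<Rightarrow> bool" where
  "zero_normalized D \<longleftrightarrow> 0 \<in> D \<and> (\<forall>d\<in>D. 0 \<le> d)"

definition ngens :: "nat \<Rightarrow> int set \<Rightarrow> int set" where
  "ngens n D = {a \<in> D. a - int n \<notin> D}"

definition gfun :: "nat \<Rightarrow> int set \<Rightarrow> int \<Rightarrow> nat" where
  "gfun m D x = card ({x..<x + int m} - D)"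

definition Gn :: "nat \<Rightarrow> nat \<Rightarrow> int set \<Rightarrow> nat list" where
  "Gn m n D = map (gfun m D) (sorted_list_of_set (ngens n D))"

definition young_cells :: "nat list \<Rightarrow> (nat \<times> nat) set" where
  "young_cells cs = {(i, j). i < length cs \<and> j < cs ! i}"

definition transpose_cells :: "(nat \<times> nat) set \<Rightarrow> (nat \<times> nat) set" where
  "transpose_cells C = {(j, i). (i, j) \<in> C}"

definition dual :: "nat \<Rightarrow> nat \<Rightarrow> int set \<Rightarrow> int set" where
  "dual m n D = {phi. \<forall>d\<in>D. phi + d \<in> Gamma m n}"

definition hat :: "nat \<Rightarrow> nat \<Rightarrow> int set \<Rightarrow> int set" where
  "hat m n D = (\<lambda>x. x - (LEAST phi. phi \<in> dual m n D)) ` dual m n D"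

end

theory Submission
  imports Defs
begin

text \<open>
  The \<open>n\<close>-generators \<open>B\<close> of \<open>\<Delta>\<close> form a complete residue system modulo \<open>n\<close> and
  \<open>\<Delta> = B + n\<nat>\<close>. Since \<open>b + n \<in> \<Delta>\<close>, the window \<open>[b, b + n + 1)\<close> meets the complement
  of \<open>\<Delta>\<close> once in each residue class whose generator \<open>c\<close> satisfies \<open>c \<ge> b + n\<close>, so
  \<open>g\<^sub>n(b) = #{c \<in> B. c \<ge> b + n}\<close>; with \<open>b\<^sub>0 < \<dots> < b\<^sub>n\<^sub>-\<^sub>1\<close> the cell \<open>(i, j)\<close> lies in
  \<open>G\<^sub>n(\<Delta>)\<close> iff \<open>b\<^sub>i + n \<le> b\<^sub>n\<^sub>-\<^sub>1\<^sub>-\<^sub>j\<close>.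
  The semigroup \<open>\<Gamma>\<^sub>n\<^sub>+\<^sub>1\<^sub>,\<^sub>n\<close> is symmetric, hence \<open>\<Delta>\<^sup>* = {\<phi>. F - \<phi> \<notin> \<Delta>}\<close> for its
  Frobenius number \<open>F\<close>, and \<open>hat \<Delta> = {y. M - y \<notin> \<Delta>}\<close> for the largest gap \<open>M\<close> of \<open>\<Delta>\<close>.
  Its \<open>n\<close>-generators are \<open>M + n - B\<close>, whose increasing enumeration reverses that of \<open>B\<close>;
  substituting into the criterion above exchanges \<open>i\<close> and \<open>j\<close>.
\<close>

section \<open>Sorted lists and Young diagrams\<close>

lemma card_ge_less_iff:
  fixes s :: "'a::linorder list"
  assumes "sorted_wrt (<) s"
  shows "k < card {b \<in> set s. t \<le> b} \<longleftrightarrow> k < length s \<and> t \<le> s ! (length s - 1 - k)"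
  using assms
proof (induction s arbitrary: k rule: rev_induct)
  case Nil
  then show ?case by simp
next
  case (snoc x xs)
  have sorted: "sorted_wrt (<) xs" and below: "\<forall>y\<in>set xs. y < x"
    using snoc.prems by (auto simp: sorted_wrt_append)
  show ?case
  proof (cases "t \<le> x")
    case True
    have "{b \<in> set (xs @ [x]). t \<le> b} = insert x {b \<in> set xs. t \<le> b}"
      using True by auto
    then have card: "card {b \<in> set (xs @ [x]). t \<le> b} = Suc (card {b \<in> set xs. t \<le> b})"
      using below by auto
    show ?thesis
    proof (cases k)
      case 0
      then show ?thesis using card True by (simp add: nth_append)
    next
      case (Suc k')
      then show ?thesis
        using card snoc.IH[OF sorted, of k'] by (auto simp: nth_append)
    qed
  next
    case False
    have le_x: "y \<le> x" if "y \<in> set (xs @ [x])" for y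
      using that below by auto
    then have "{b \<in> set (xs @ [x]). t \<le> b} = {}"
      using False by (auto dest: order.trans)
    then have "\<not> k < card {b \<in> set (xs @ [x]). t \<le> b}"
      by (simp only: card.empty not_less0 not_False_eq_True)
    moreover have "\<not> (k < Suc (length xs) \<and> t \<le> (xs @ [x]) ! (length xs - k))"
      using False le_x[OF nth_mem, of "length xs - k"] by force
    ultimately show ?thesis by simp
  qed
qed

lemma sorted_list_of_set_reflect:
  fixes c :: int
  assumes "finite A"
  shows "sorted_list_of_set ((\<lambda>b. c - b) ` A) = map (\<lambda>b. c - b) (rev (sorted_list_of_set A))"
proof (rule strict_sorted_equal)
  show "sorted_wrt (<) (map (\<lambda>b. c - b) (rev (sorted_list_of_set A)))"
    by (simp add: sorted_wrt_map sorted_wrt_rev)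
qed (use assms in simp_all)

text \<open>If \<open>s\<close> enumerates the \<open>n\<close>-generators of \<open>\<Delta>\<close>, then \<open>height_profile n s\<close> is \<open>G\<^sub>n(\<Delta>)\<close>
  (lemma \<open>Gn_nclosure\<close>).\<close>
definition height_profile :: "int \<Rightarrow> int list \<Rightarrow> nat list" where
  "height_profile d s = map (\<lambda>b. card {c \<in> set s. b + d \<le> c}) s"

lemma mem_young_cells_height_profile:
  assumes "sorted_wrt (<) s"
  shows "(i, j) \<in> young_cells (height_profile d s) \<longleftrightarrow>
    i < length s \<and> j < length s \<and> s ! i + d \<le> s ! (length s - 1 - j)"
  using card_ge_less_iff[OF assms] by (auto simp: young_cells_def height_profile_def)

lemma young_cells_height_profile_reflect:
  fixes c d :: int
  assumes "sorted_wrt (<) s"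
  shows "young_cells (height_profile d (map (\<lambda>b. c - b) (rev s))) =
    transpose_cells (young_cells (height_profile d s))"
proof -
  let ?s' = "map (\<lambda>b. c - b) (rev s)"
  have "sorted_wrt (<) ?s'"
    using assms by (simp add: sorted_wrt_map sorted_wrt_rev)
  then show ?thesis
    unfolding transpose_cells_def
    using mem_young_cells_height_profile[OF assms]
      mem_young_cells_height_profile[of ?s']
    by (auto simp: rev_nth)
qed

section \<open>Sets generated by a complete residue system\<close>

lemma mod_eq_le_imp_eq_add_mult:
  fixes b x :: int
  assumes "0 < n" "b mod n = x mod n" "b \<le> x"
  obtains k :: nat where "x = b + int k * n"
proof -
  have "n dvd x - b"
    using assms(2)[symmetric] by (simp add: mod_eq_dvd_iff)
  then obtain j where j: "x - b = n * j" ..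
  then have "0 \<le> j"
    using assms(1,3) by (metis diff_ge_0_iff_ge zero_le_mult_iff not_le)
  with j have "x = b + int (nat j) * n" by (simp add: algebra_simps)
  then show thesis ..
qed

lemma mod_eq_less_imp_add_le:
  fixes b x :: int
  assumes "0 < n" "b mod n = x mod n" "b < x"
  shows "b + n \<le> x"
proof -
  obtain k :: nat where k: "x = b + int k * n"
    using mod_eq_le_imp_eq_add_mult[OF assms(1,2)] assms(3) by fastforce
  with assms(3) have "k \<noteq> 0" by (cases k) auto
  with k assms(1) show ?thesis by (simp add: mult_le_cancel_right1)
qed

definition complete_residue_system :: "nat \<Rightarrow> int set \<Rightarrow> bool" where
  "complete_residue_system n B \<longleftrightarrow> (\<forall>x. \<exists>!b. b \<in> B \<and> b mod int n = x mod int n)"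

definition nclosure :: "nat \<Rightarrow> int set \<Rightarrow> int set" where
  "nclosure n B = {x. \<exists>b\<in>B. b mod int n = x mod int n \<and> b \<le> x}"

lemma complete_residue_system_ex:
  assumes "complete_residue_system n B"
  obtains b where "b \<in> B" "b mod int n = x mod int n"
  using assms unfolding complete_residue_system_def by blast

lemma complete_residue_system_unique:
  assumes "complete_residue_system n B" "b \<in> B" "c \<in> B" "b mod int n = c mod int n"
  shows "b = c"
proof -
  from assms(1) have "\<exists>!d. d \<in> B \<and> d mod int n = c mod int n"
    unfolding complete_residue_system_def by blast
  with assms(2-4) show ?thesis by blast
qed

lemma complete_residue_system_finite:
  assumes "0 < n" "complete_residue_system n B"
  shows "finite B"
proof (rule finite_imageD)
  show "finite ((\<lambda>b. b mod int n) ` B)"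
    by (rule finite_subset[of _ "{0..<int n}"]) (use assms(1) in auto)
  show "inj_on (\<lambda>b. b mod int n) B"
    using complete_residue_system_unique[OF assms(2)] by (auto intro: inj_onI)
qed

lemma complete_residue_system_reflect:
  assumes "complete_residue_system n B"
  shows "complete_residue_system n ((\<lambda>b. c - b) ` B)"
  unfolding complete_residue_system_def
proof
  fix x
  obtain b where b: "b \<in> B" "b mod int n = (c - x) mod int n"
    using complete_residue_system_ex[OF assms] .
  then have "(c - b) mod int n = x mod int n"
    using mod_diff_cong[OF refl b(2), of c] by simp
  moreover have "b' = b" if "b' \<in> B" "(c - b') mod int n = x mod int n" for b'
  proof -
    have "(c - (c - b')) mod int n = (c - x) mod int n"
      using mod_diff_cong[OF refl that(2)] .
    then show ?thesis
      using complete_residue_system_unique[OF assms that(1) b(1)] b(2) by simp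
  qed
  ultimately show "\<exists>!b'. b' \<in> (\<lambda>b. c - b) ` B \<and> b' mod int n = x mod int n"
    using b(1) by (intro ex1I[of _ "c - b"]) blast+
qed

lemma mem_nclosure_iff:
  assumes "complete_residue_system n B" "b \<in> B" "b mod int n = x mod int n"
  shows "x \<in> nclosure n B \<longleftrightarrow> b \<le> x"
proof
  assume "x \<in> nclosure n B"
  then obtain c where "c \<in> B" "c mod int n = x mod int n" "c \<le> x"
    by (auto simp: nclosure_def)
  with assms show "b \<le> x"
    using complete_residue_system_unique[OF assms(1), of b c] by simp
qed (use assms in \<open>auto simp: nclosure_def\<close>)

lemma nclosure_reflect:
  assumes "0 < n" "complete_residue_system n B"
  shows "nclosure n ((\<lambda>b. c - b) ` B) = {y. c - int n - y \<notin> nclosure n B}"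
proof (intro set_eqI)
  fix y
  obtain b where b: "b \<in> B" "b mod int n = (c - int n - y) mod int n"
    using complete_residue_system_ex[OF assms(2)] .
  have "(c - b) mod int n = (c - (c - int n - y)) mod int n"
    using mod_diff_cong[OF refl b(2)] .
  then have residue: "(c - b) mod int n = y mod int n"
    by simp
  have "y \<in> nclosure n ((\<lambda>b. c - b) ` B) \<longleftrightarrow> c - b \<le> y"
    using mem_nclosure_iff[OF complete_residue_system_reflect[OF assms(2)] _ residue] b(1)
    by blast
  also have "\<dots> \<longleftrightarrow> \<not> b \<le> c - int n - y"
    using mod_eq_less_imp_add_le[of "int n" "c - int n - y" b] b(2) assms(1) by force
  also have "\<dots> \<longleftrightarrow> c - int n - y \<notin> nclosure n B"
    using mem_nclosure_iff[OF assms(2) b] by simp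
  finally show "y \<in> nclosure n ((\<lambda>b. c - b) ` B) \<longleftrightarrow> y \<in> {y. c - int n - y \<notin> nclosure n B}"
    by simp
qed

lemma ngens_nclosure:
  assumes "0 < n" "complete_residue_system n B"
  shows "ngens n (nclosure n B) = B"
proof (intro equalityI subsetI)
  fix a
  assume "a \<in> ngens n (nclosure n B)"
  then have a: "a \<in> nclosure n B" "a - int n \<notin> nclosure n B"
    by (auto simp: ngens_def)
  then obtain b where b: "b \<in> B" "b mod int n = a mod int n" "b \<le> a"
    by (auto simp: nclosure_def)
  have "\<not> b < a"
  proof
    assume "b < a"
    then have "b \<le> a - int n"
      using mod_eq_less_imp_add_le[of "int n" b a] b(2) assms(1) by simp
    then have "a - int n \<in> nclosure n B"
      using mem_nclosure_iff[OF assms(2) b(1), of "a - int n"] b(2) by simp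
    with a(2) show False ..
  qed
  with b show "a \<in> B"
    by simp
next
  fix a
  assume a: "a \<in> B"
  then have "a \<in> nclosure n B" "a - int n \<notin> nclosure n B"
    using mem_nclosure_iff[OF assms(2) a, of a] mem_nclosure_iff[OF assms(2) a, of "a - int n"]
      assms(1) by simp_all
  then show "a \<in> ngens n (nclosure n B)"
    by (simp add: ngens_def)
qed

lemma card_window_diff_nclosure:
  assumes "0 < n" "complete_residue_system n B"
  shows "card ({t..<t + int n} - nclosure n B) = card {c \<in> B. t + int n \<le> c}"
proof -
  \<comment> \<open>\<open>f c\<close> is the point of the window in the residue class of \<open>c\<close>.\<close>
  define f where "f c = t + (c - t) mod int n" for c
  have f_mod: "f c mod int n = c mod int n" for c
    by (simp add: f_def mod_add_right_eq)
  have "inj_on f {c \<in> B. t + int n \<le> c}"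
  proof (rule inj_onI)
    fix c c'
    assume "c \<in> {c \<in> B. t + int n \<le> c}" "c' \<in> {c \<in> B. t + int n \<le> c}" "f c = f c'"
    moreover from \<open>f c = f c'\<close> have "c mod int n = c' mod int n"
      by (metis f_mod)
    ultimately show "c = c'"
      using complete_residue_system_unique[OF assms(2)] by blast
  qed
  moreover have "f ` {c \<in> B. t + int n \<le> c} = {t..<t + int n} - nclosure n B"
  proof (intro equalityI subsetI)
    fix y
    assume "y \<in> f ` {c \<in> B. t + int n \<le> c}"
    then obtain c where c: "c \<in> B" "t + int n \<le> c" "y = f c"
      by auto
    have y: "t \<le> y" "y < t + int n"
      using c(3) assms(1) by (auto simp: f_def)
    have "y \<notin> nclosure n B"
      using mem_nclosure_iff[OF assms(2) c(1), of y] f_mod[of c] c(2,3) y(2) by simp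
    with y show "y \<in> {t..<t + int n} - nclosure n B" by simp
  next
    fix x
    assume x: "x \<in> {t..<t + int n} - nclosure n B"
    obtain c where c: "c \<in> B" "c mod int n = x mod int n"
      using complete_residue_system_ex[OF assms(2)] .
    with x have "\<not> c \<le> x"
      using mem_nclosure_iff[OF assms(2) c] by simp
    then have "x + int n \<le> c"
      using mod_eq_less_imp_add_le[of "int n" x c] c(2) assms(1) by simp
    moreover have "f c = x"
    proof -
      have "(c - t) mod int n = (x - t) mod int n"
        using mod_diff_cong[OF c(2) refl] .
      also have "\<dots> = x - t"
        using x by (intro mod_pos_pos_trivial) auto
      finally show ?thesis by (simp add: f_def)
    qed
    ultimately show "x \<in> f ` {c \<in> B. t + int n \<le> c}"
      using c(1) x by force
  qed
  ultimately show ?thesis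
    by (metis card_image)
qed

lemma gfun_nclosure:
  assumes "0 < n" "complete_residue_system n B" "b \<in> B"
  shows "gfun (n + 1) (nclosure n B) b = card {c \<in> B. b + int n \<le> c}"
proof -
  have "b + int n \<in> nclosure n B"
    using assms(3) by (auto simp: nclosure_def)
  then have "x \<noteq> b + int n" if "x \<notin> nclosure n B" for x
    using that by auto
  then have "{b..<b + int (n + 1)} - nclosure n B = {b..<b + int n} - nclosure n B"
    by fastforce
  then show ?thesis
    using card_window_diff_nclosure[OF assms(1,2), of b] by (simp add: gfun_def)
qed

lemma Gn_nclosure:
  assumes "0 < n" "complete_residue_system n B"
  shows "Gn (n + 1) n (nclosure n B) = height_profile (int n) (sorted_list_of_set B)"
proof -
  have "finite B"
    using complete_residue_system_finite[OF assms] .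
  with gfun_nclosure[OF assms] show ?thesis
    by (simp add: Gn_def height_profile_def ngens_nclosure[OF assms])
qed

section \<open>Sets closed under adding \<open>n\<close>\<close>

lemma add_mult_mem:
  assumes "\<And>x. x \<in> D \<Longrightarrow> x + int n \<in> D" "x \<in> D"
  shows "x + int k * int n \<in> D"
proof (induction k)
  case (Suc k)
  then have "x + int k * int n + int n \<in> D" by (rule assms(1))
  then show ?case by (simp add: algebra_simps)
qed (use assms(2) in simp)

lemma mem_nclosure_ngens:
  assumes "D \<subseteq> {0..}" "0 < n" "x \<in> D"
  shows "x \<in> nclosure n (ngens n D)"
  using assms(3)
proof (induction "nat x" arbitrary: x rule: less_induct)
  case less
  show ?case
  proof (cases "x - int n \<in> D")
    case True
    have "nat (x - int n) < nat x"
      using assms(1,2) True by force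
    then have "x - int n \<in> nclosure n (ngens n D)"
      using less.hyps True by blast
    then show ?thesis
      by (force simp: nclosure_def)
  next
    case False
    with less.prems have "x \<in> ngens n D" by (simp add: ngens_def)
    then show ?thesis by (force simp: nclosure_def)
  qed
qed

lemma ngens_le:
  assumes "0 < n" "\<And>x. x \<in> D \<Longrightarrow> x + int n \<in> D"
    and "b \<in> D" "c \<in> ngens n D" "b mod int n = c mod int n"
  shows "c \<le> b"
proof (rule ccontr)
  assume "\<not> c \<le> b"
  then have "b + int n \<le> c"
    using mod_eq_less_imp_add_le[of "int n" b c] assms(1,5) by simp
  then obtain k :: nat where "c - int n = b + int k * int n"
    using mod_eq_le_imp_eq_add_mult[of "int n" b "c - int n"] assms(1,5) by auto
  then have "c - int n \<in> D"
    using add_mult_mem[OF assms(2,3)] by simp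
  with assms(4) show False by (simp add: ngens_def)
qed

lemma nclosure_ngens:
  assumes "D \<subseteq> {0..}" "0 < n" "\<And>x. x \<in> D \<Longrightarrow> x + int n \<in> D"
  shows "nclosure n (ngens n D) = D"
proof (intro equalityI subsetI)
  fix x
  assume "x \<in> nclosure n (ngens n D)"
  then obtain b where b: "b \<in> D" "b mod int n = x mod int n" "b \<le> x"
    by (auto simp: nclosure_def ngens_def)
  then obtain k :: nat where "x = b + int k * int n"
    using mod_eq_le_imp_eq_add_mult[of "int n" b x] assms(2) by auto
  then show "x \<in> D"
    using add_mult_mem[OF assms(3) b(1)] by simp
qed (use mem_nclosure_ngens[OF assms(1,2)] in blast)

lemma complete_residue_system_ngens:
  assumes "D \<subseteq> {0..}" "0 < n" "\<And>x. x \<in> D \<Longrightarrow> x + int n \<in> D"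
    and "\<And>r. \<exists>x\<in>D. x mod int n = r mod int n"
  shows "complete_residue_system n (ngens n D)"
  unfolding complete_residue_system_def
proof
  fix r
  obtain x where "x \<in> D" "x mod int n = r mod int n"
    using assms(4) by blast
  then obtain b where b: "b \<in> ngens n D" "b mod int n = r mod int n"
    using mem_nclosure_ngens[OF assms(1,2)] by (force simp: nclosure_def)
  have "c = b" if "c \<in> ngens n D" "c mod int n = r mod int n" for c
    using ngens_le[OF assms(2,3), of c b] ngens_le[OF assms(2,3), of b c] that b
    by (auto simp: ngens_def)
  with b show "\<exists>!b. b \<in> ngens n D \<and> b mod int n = r mod int n" by blast
qed

section \<open>Duality for \<open>\<Gamma>\<^sub>n\<^sub>+\<^sub>1\<^sub>,\<^sub>n\<close>\<close>

lemma Gamma_iff: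
  "x \<in> Gamma m n \<longleftrightarrow> (\<exists>a b :: int. 0 \<le> a \<and> 0 \<le> b \<and> x = a * int m + b * int n)"
proof
  assume "x \<in> Gamma m n"
  then obtain a b where "x = int (a * m + b * n)"
    by (auto simp: Gamma_def)
  then show "\<exists>a b :: int. 0 \<le> a \<and> 0 \<le> b \<and> x = a * int m + b * int n"
    by (intro exI[of _ "int a"] exI[of _ "int b"]) simp
next
  assume "\<exists>a b :: int. 0 \<le> a \<and> 0 \<le> b \<and> x = a * int m + b * int n"
  then obtain a b :: int where "0 \<le> a" "0 \<le> b" "x = a * int m + b * int n"
    by blast
  then have "x = int (nat a * m + nat b * n)"
    by simp
  then show "x \<in> Gamma m n"
    unfolding Gamma_def by blast
qed

lemma Gamma_nonneg: "x \<in> Gamma m n \<Longrightarrow> 0 \<le> x"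
  by (auto simp: Gamma_def)

lemma semimodule_add_Gamma:
  "semimodule m n D \<Longrightarrow> x \<in> D \<Longrightarrow> g \<in> Gamma m n \<Longrightarrow> x + g \<in> D"
  by (simp add: semimodule_def)

lemma semimodule_add_n:
  assumes "semimodule m n D" "x \<in> D"
  shows "x + int n \<in> D"
proof -
  have "int n \<in> Gamma m n"
    unfolding Gamma_iff by (intro exI[of _ 0] exI[of _ 1]) simp
  with assms show ?thesis
    by (rule semimodule_add_Gamma)
qed

lemma semimodule_meets_residue:
  assumes "0 < n" "semimodule (n + 1) n D" "0 \<in> D"
  shows "\<exists>x\<in>D. x mod int n = r mod int n"
proof
  let ?r = "r mod int n"
  have "?r * int (n + 1) + (int n - ?r) * int n \<in> Gamma (n + 1) n"
    unfolding Gamma_iff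
    by (rule exI[of _ ?r], rule exI[of _ "int n - ?r"])
      (use assms(1) in \<open>simp add: order.strict_implies_order\<close>)
  then have "0 + (?r * int (n + 1) + (int n - ?r) * int n) \<in> D"
    by (rule semimodule_add_Gamma[OF assms(2,3)])
  then show "?r + int n * int n \<in> D"
    by (simp add: algebra_simps)
qed simp

text \<open>The Frobenius number \<open>m n - m - n\<close> of \<open>\<Gamma>\<^sub>m\<^sub>,\<^sub>n\<close> for \<open>m = n + 1\<close>.\<close>
definition frobenius :: "nat \<Rightarrow> int" where
  "frobenius n = int n * int n - int n - 1"

lemma frobenius_notin_Gamma:
  assumes "0 < n"
  shows "frobenius n \<notin> Gamma (n + 1) n"
proof
  assume "frobenius n \<in> Gamma (n + 1) n"
  then obtain a b :: int where ab: "0 \<le> a" "0 \<le> b" "frobenius n = a * (int n + 1) + b * int n"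
    unfolding Gamma_iff by auto
  then have "a + 1 = int n * (int n - 1 - a - b)"
    by (simp add: frobenius_def algebra_simps)
  then have "int n \<le> a + 1"
    using ab(1) by (intro zdvd_imp_le) auto
  then have "int n * int n - 1 \<le> a * (int n + 1)"
    using mult_right_mono[of "int n - 1" a "int n + 1"] by (simp add: algebra_simps)
  moreover have "0 \<le> b * int n"
    using ab(2) by simp
  ultimately show False
    using ab(3) assms by (simp add: frobenius_def)
qed

lemma frobenius_diff_in_Gamma:
  assumes "0 < n" "x \<notin> Gamma (n + 1) n"
  shows "frobenius n - x \<in> Gamma (n + 1) n"
proof -
  define q r where "q = x div int n" and "r = x mod int n"
  have x: "x = r * (int n + 1) + (q - r) * int n"
    by (simp add: q_def r_def algebra_simps)
  have r: "0 \<le> r" "r < int n"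
    using assms(1) by (simp_all add: r_def)
  have "q < r"
  proof (rule ccontr)
    assume "\<not> q < r"
    with x r(1) have "x \<in> Gamma (n + 1) n"
      unfolding Gamma_iff by (intro exI[of _ r] exI[of _ "q - r"]) simp
    with assms(2) show False ..
  qed
  have "frobenius n - x = (int n - 1 - r) * (int n + 1) + (r - q - 1) * int n"
    by (subst x) (simp add: frobenius_def algebra_simps)
  with r \<open>q < r\<close> show ?thesis
    unfolding Gamma_iff by (intro exI[of _ "int n - 1 - r"] exI[of _ "r - q - 1"]) simp
qed

lemma mem_dual_iff:
  assumes "0 < n" "semimodule (n + 1) n D"
  shows "phi \<in> dual (n + 1) n D \<longleftrightarrow> frobenius n - phi \<notin> D"
proof
  assume "phi \<in> dual (n + 1) n D"
  then have "phi + (frobenius n - phi) \<in> Gamma (n + 1) n" if "frobenius n - phi \<in> D"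
    using that unfolding dual_def by blast
  with frobenius_notin_Gamma[OF assms(1)] show "frobenius n - phi \<notin> D"
    by auto
next
  assume gap: "frobenius n - phi \<notin> D"
  show "phi \<in> dual (n + 1) n D"
    unfolding dual_def
  proof (intro CollectI ballI)
    fix d
    assume "d \<in> D"
    show "phi + d \<in> Gamma (n + 1) n"
    proof (rule ccontr)
      assume "phi + d \<notin> Gamma (n + 1) n"
      then have "frobenius n - (phi + d) \<in> Gamma (n + 1) n"
        by (rule frobenius_diff_in_Gamma[OF assms(1)])
      with assms(2) \<open>d \<in> D\<close> have "d + (frobenius n - (phi + d)) \<in> D"
        by (rule semimodule_add_Gamma)
      with gap show False
        by simp
    qed
  qed
qed

lemma gap_le_frobenius:
  assumes "0 < n" "semimodule (n + 1) n D" "0 \<in> D" "x \<notin> D"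
  shows "x \<le> frobenius n"
proof -
  have "x \<notin> Gamma (n + 1) n"
    using assms(2-4) by (force simp: semimodule_def)
  then show ?thesis
    using Gamma_nonneg[OF frobenius_diff_in_Gamma[OF assms(1)]] by simp
qed

lemma hat_eq_reflected_complement:
  assumes "0 < n" "semimodule (n + 1) n D" "M \<notin> D" "\<And>x. x \<notin> D \<Longrightarrow> x \<le> M"
  shows "hat (n + 1) n D = {y. M - y \<notin> D}"
proof -
  have dual_eq: "dual (n + 1) n D = {phi. frobenius n - phi \<notin> D}"
    using mem_dual_iff[OF assms(1,2)] by blast
  have least: "(LEAST phi. frobenius n - phi \<notin> D) = frobenius n - M"
  proof (rule Least_equality)
    show "frobenius n - (frobenius n - M) \<notin> D"
      using assms(3) by simp
    show "frobenius n - M \<le> phi" if "frobenius n - phi \<notin> D" for phi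
      using assms(4)[OF that] by simp
  qed
  show ?thesis
    unfolding hat_def dual_eq mem_Collect_eq least
  proof (intro set_eqI iffI)
    fix y
    assume "y \<in> {y. M - y \<notin> D}"
    then show "y \<in> (\<lambda>x. x - (frobenius n - M)) ` {phi. frobenius n - phi \<notin> D}"
      by (intro image_eqI[of _ _ "y + (frobenius n - M)"]) auto
  qed auto
qed

lemma greatest_gap_exists:
  assumes "0 < n" "semimodule (n + 1) n D" "zero_normalized D"
  obtains M where "M \<notin> D" "\<And>x. x \<notin> D \<Longrightarrow> x \<le> M"
proof
  let ?gaps = "{-1..frobenius n} - D"
  have fin: "finite ?gaps"
    by simp
  have "0 \<in> D" "-1 \<notin> D"
    using assms(3) by (auto simp: zero_normalized_def)
  then have gap: "-1 \<in> ?gaps"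
    using gap_le_frobenius[OF assms(1,2)] by auto
  then have "Max ?gaps \<in> ?gaps"
    by (intro Max_in fin) auto
  then show "Max ?gaps \<notin> D"
    by blast
  fix x
  assume "x \<notin> D"
  show "x \<le> Max ?gaps"
  proof (cases "x < -1")
    case True
    with Max_ge[OF fin gap] show ?thesis by linarith
  next
    case False
    with \<open>x \<notin> D\<close> have "x \<in> ?gaps"
      using gap_le_frobenius[OF assms(1,2) \<open>0 \<in> D\<close>] by auto
    then show ?thesis
      by (rule Max_ge[OF fin])
  qed
qed

theorem mainTheorem8:
  fixes n m :: nat and D :: "int set"
  assumes "n > 0" and "m = n + 1"
    and "semimodule m n D" and "zero_normalized D"
  shows "young_cells (Gn m n (hat m n D)) = transpose_cells (young_cells (Gn m n D))"
proof -
  note semi = assms(3)[unfolded assms(2)]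
  define B where "B = ngens n D"
  have nonneg: "D \<subseteq> {0..}" and add_n: "\<And>x. x \<in> D \<Longrightarrow> x + int n \<in> D"
    using semi semimodule_add_n by (auto simp: semimodule_def)
  have "0 \<in> D"
    using assms(4) by (simp add: zero_normalized_def)
  then have crs: "complete_residue_system n B"
    unfolding B_def using complete_residue_system_ngens[OF nonneg assms(1) add_n]
      semimodule_meets_residue[OF assms(1) semi] by blast
  have D_eq: "D = nclosure n B"
    unfolding B_def using nclosure_ngens[OF nonneg assms(1) add_n] by simp
  obtain M where "M \<notin> D" "\<And>x. x \<notin> D \<Longrightarrow> x \<le> M"
    using greatest_gap_exists[OF assms(1) semi assms(4)] by blast
  then have "hat m n D = nclosure n ((\<lambda>b. M + int n - b) ` B)"
    using hat_eq_reflected_complement[OF assms(1) semi] nclosure_reflect[OF assms(1) crs]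
    by (simp add: assms(2) D_eq)
  moreover have "finite B"
    using complete_residue_system_finite[OF assms(1) crs] .
  ultimately have "Gn m n (hat m n D) =
      height_profile (int n) (map (\<lambda>b. M + int n - b) (rev (sorted_list_of_set B)))"
    using Gn_nclosure[OF assms(1) complete_residue_system_reflect[OF crs]]
    by (simp add: assms(2) sorted_list_of_set_reflect)
  moreover have "Gn m n D = height_profile (int n) (sorted_list_of_set B)"
    using Gn_nclosure[OF assms(1) crs] by (simp add: assms(2) D_eq)
  ultimately show ?thesis
    using young_cells_height_profile_reflect[of "sorted_list_of_set B"] by simp
qed

end
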